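(* Let $k$, $t$ and $q$ be integers such that $q \ge 0$, $0 \le t < k$, $t \equiv k \pmod 2$, let $s \in [0,t+1]$ be the unique integer with $s \equiv q + \frac{k-t-2}{2} \pmod{t+2}$, and assume $\frac{1}{2(t+2)}k^2 + \frac{q-s}{t+2}k - \frac{t}{2} + s>k$. Let \[n = \frac{1}{2(t+2)}k^2 + \frac{q-s}{t+2}k - \frac{t}{2} + s - 1.\] Then a function $f :[n] \rightarrow \{-1,1\}$ satisfies $|f([n])| = q$ and $|f(B)| > t$ for all $k$-blocks $B \subseteq [n]$ if and only if $f \in \mathcal{F}_{k,t,q}$.
   Context: $[n]=\{1,\dots,n\}$; for $Y\subseteq[n]$, $f(Y)=\sum_{y\in Y}f(y)$; a $k$-block is a set of $k$ consecutive integers. The family $\mathcal{F}_{k,t,q}$ is defined as follows (with $k,t,q,s,n$ as in the claim). Write $n=km+r$ with integers $m\ge 0$, $0\le r\le k-1$. A function $f:[n]\to\{-1,1\}$ belongs to $\mathcal{F}_{k,t,q}$ if and only if, for one choice of sign $\epsilon\in\{1,-1\}$, $\epsilon f(x)=-1$ for $x\in R\setminus S$ and $\epsilon f(x)=1$ otherwise, where $R,S\subseteq[n]$ are as follows: if $r=0$, $R=S=\emptyset$; if $r\neq 0$, $R=\bigcup_{i=1}^{m+1}R_i$ with $R_i=\{(i-1)k+1,(i-1)k+2,\dots,(i-1)k+r\}$, and $S=\emptyset$ if $s=0$, while if $s\neq 0$, $S=\bigcup_{i=1}^{m+1}S_i$ where $S_i=\{a^i_1,\dots,a^i_s\}\subseteq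 R_i$ with $a^i_1<a^i_2<\dots<a^i_s$ and $a^{i+1}_\ell\le a^i_\ell+k$ for all $i\in[m]$ and $\ell\in[s]$. *)

theory Defs
  imports Complex_Main "HOL-Number_Theory.Cong"
begin

definition fsum :: "(nat \<Rightarrow> int) \<Rightarrow> nat set \<Rightarrow> int" where
  "fsum f Y = (\<Sum>y\<in>Y. f y)"

definition kblocks :: "nat \<Rightarrow> nat \<Rightarrow> nat set set" where
  "kblocks k n = {{a..a + k - 1} | a. 1 \<le> a \<and> a + k - 1 \<le> n}"

definition Rblk :: "nat \<Rightarrow> nat \<Rightarrow> nat \<Rightarrow> nat set" where
  "Rblk k r i = {(i - 1) * k + 1 .. (i - 1) * k + r}"

definition admissible_a :: "nat \<Rightarrow> nat \<Rightarrow> nat \<Rightarrow> nat \<Rightarrow> (nat \<Rightarrow> nat \<Rightarrow> nat) \<Rightarrow> bool" where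
  "admissible_a k r m s a \<longleftrightarrow>
     (\<forall>i\<in>{1..m+1}. strict_mono_on {1..s} (a i) \<and> (\<forall>l\<in>{1..s}. a i l \<in> Rblk k r i)) \<and>
     (\<forall>i\<in>{1..m}. \<forall>l\<in>{1..s}. a (i + 1) l \<le> a i l + k)"

text \<open>Membership of f in the family F_{k,t,q}; the family depends on t and q only through s.
  Here n = k m + r with m = n div k, r = n mod k.\<close>
definition inF :: "nat \<Rightarrow> nat \<Rightarrow> nat \<Rightarrow> (nat \<Rightarrow> int) \<Rightarrow> bool" where
  "inF k s n f \<longleftrightarrow>
     (let m = n div k; r = n mod k in
      \<exists>R S. (if r = 0 then R = {} \<and> S = {}
              else R = (\<Union>i\<in>{1..m+1}. Rblk k r i) \<and>
                   (if s = 0 then S = {}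
                    else (\<exists>a. admissible_a k r m s a \<and>
                              S = {a i l | i l. i \<in> {1..m+1} \<and> l \<in> {1..s}}))) \<and>
            (\<exists>\<epsilon>\<in>{1::int, -1}. \<forall>x\<in>{1..n}. \<epsilon> * f x = (if x \<in> R - S then -1 else 1)))"

end

theory Submission
  imports Defs
begin

text \<open>Write \<open>k = t + 2p\<close> and let \<open>N\<close> be the set where \<open>\<epsilon> f = -1\<close>. A \<open>k\<close>-block \<open>B\<close>
  has \<open>|f(B)| > t\<close> iff one of the two signs occurs at most \<open>p - 1\<close> times in \<open>B\<close>; since
  adjacent blocks differ in one place and \<open>2p \<le> k\<close>, the same sign \<open>-\<epsilon>\<close> is the minority in
  every block. Covering \<open>[n]\<close> by \<open>m + 1\<close> blocks gives \<open>|N| \<le> (m + 1)(p - 1)\<close>, and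
  \<open>|f([n])| = q\<close> says precisely that equality holds. Equality forces \<open>N \<subseteq> R\<close> with exactly
  \<open>p - 1\<close> elements in each \<open>R\<^sub>i\<close>; the remaining \<open>s\<close> elements \<open>a\<^sup>i\<^sub>1 < \<dots> < a\<^sup>i\<^sub>s\<close>
  of \<open>R\<^sub>i\<close> satisfy \<open>a\<^sup>i\<^sup>+\<^sup>1\<^sub>l \<le> a\<^sup>i\<^sub>l + k\<close>, as otherwise the block just after
  \<open>a\<^sup>i\<^sub>l\<close> would contain \<open>r - (s - 1) = p\<close> elements of \<open>N\<close>. Conversely that condition makes
  every block meet \<open>S\<close> in at least \<open>s\<close> places, hence \<open>R - S\<close> in at most \<open>p - 1\<close>.\<close>

lemma card_less_nth_sorted_list_of_set:
  fixes A :: "nat set"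
  assumes "finite A" and "j < card A"
  shows "card {z\<in>A. z < sorted_list_of_set A ! j} = j"
proof -
  let ?xs = "sorted_list_of_set A"
  have xs: "set ?xs = A" "length ?xs = card A" "sorted_wrt (<) ?xs" "distinct ?xs"
    using assms(1) by (auto simp: strict_sorted_list_of_set)
  have "{z\<in>A. z < ?xs ! j} = (!) ?xs ` {0..<j}"
  proof (intro set_eqI iffI)
    fix z assume z: "z \<in> {z\<in>A. z < ?xs ! j}"
    then obtain i where i: "i < length ?xs" "z = ?xs ! i"
      using xs(1) by (metis (no_types, lifting) in_set_conv_nth mem_Collect_eq)
    have "i < j"
    proof (rule ccontr)
      assume "\<not> i < j"
      then have "?xs ! j \<le> ?xs ! i"
        using sorted_wrt_nth_less[OF xs(3), of j i] i by (cases "i = j") auto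
      then show False using z i by auto
    qed
    then show "z \<in> (!) ?xs ` {0..<j}" using i by auto
  next
    fix z assume "z \<in> (!) ?xs ` {0..<j}"
    then obtain i where i: "i < j" "z = ?xs ! i" by auto
    then show "z \<in> {z\<in>A. z < ?xs ! j}"
      using sorted_wrt_nth_less[OF xs(3) i(1)] assms(2) xs(1,2) nth_mem[of i ?xs] by auto
  qed
  moreover have "inj_on ((!) ?xs) {0..<j}"
    using xs(2,4) assms(2) by (auto simp: inj_on_def nth_eq_iff_index_eq)
  ultimately show ?thesis by (simp add: card_image)
qed

lemma card_greater_nth_sorted_list_of_set:
  fixes A :: "nat set"
  assumes "finite A" and "j < card A"
  shows "card {z\<in>A. sorted_list_of_set A ! j < z} = card A - 1 - j"
proof -
  have "card {z\<in>A. z \<le> sorted_list_of_set A ! j} = Suc j"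
  proof -
    have "{z\<in>A. z \<le> sorted_list_of_set A ! j} =
        insert (sorted_list_of_set A ! j) {z\<in>A. z < sorted_list_of_set A ! j}"
      using assms nth_mem[of j "sorted_list_of_set A"] by auto
    then show ?thesis using card_less_nth_sorted_list_of_set[OF assms] assms(1) by simp
  qed
  moreover have "card {z\<in>A. sorted_list_of_set A ! j < z} + card {z\<in>A. z \<le> sorted_list_of_set A ! j} = card A"
  proof -
    have "{z\<in>A. sorted_list_of_set A ! j < z} \<union> {z\<in>A. z \<le> sorted_list_of_set A ! j} = A" by auto
    then show ?thesis using assms(1) by (metis (no_types, lifting) card_Un_disjoint disjoint_iff
          finite_Un mem_Collect_eq not_le)
  qed
  ultimately show ?thesis by simp
qed

lemma fsum_sign_card:
  assumes "finite B" and "\<forall>x\<in>B. f x \<in> {-1, 1}" and "e \<in> {1::int, -1}"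
  shows "e * fsum f B = int (card B) - 2 * int (card {x\<in>B. e * f x = -1})"
proof -
  let ?N = "{x\<in>B. e * f x = -1}"
  have "e * fsum f B = (\<Sum>x\<in>B. e * f x)" by (simp add: fsum_def sum_distrib_left)
  also have "\<dots> = (\<Sum>x\<in>?N. e * f x) + (\<Sum>x\<in>B - ?N. e * f x)"
    using assms(1) by (metis (no_types, lifting) mem_Collect_eq subsetI sum.subset_diff add.commute)
  also have "(\<Sum>x\<in>?N. e * f x) = (\<Sum>x\<in>?N. -1)" by simp
  also have "(\<Sum>x\<in>B - ?N. e * f x) = (\<Sum>x\<in>B - ?N. 1)"
    using assms(2,3) by (intro sum.cong) auto
  finally have "e * fsum f B = - int (card ?N) + int (card (B - ?N))" by simp
  then show ?thesis using assms(1) by (simp add: card_Diff_subset card_mono)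
qed

lemma mem_Rblk_iff:
  assumes "i \<ge> 1" and "r \<le> K"
  shows "x \<in> Rblk K r i \<longleftrightarrow> x \<ge> 1 \<and> (x - 1) div K = i - 1 \<and> (x - 1) mod K < r"
proof
  assume "x \<in> Rblk K r i"
  then have x: "(i - 1) * K + 1 \<le> x" "x \<le> (i - 1) * K + r" by (auto simp: Rblk_def)
  define j where "j = x - 1 - (i - 1) * K"
  have j: "x - 1 = (i - 1) * K + j" "j < r" "j < K" using x assms(2) unfolding j_def by linarith+
  then show "x \<ge> 1 \<and> (x - 1) div K = i - 1 \<and> (x - 1) mod K < r" using x by simp
next
  assume h: "x \<ge> 1 \<and> (x - 1) div K = i - 1 \<and> (x - 1) mod K < r"
  then have "x - 1 = (i - 1) * K + (x - 1) mod K" by (metis div_mult_mod_eq)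
  then show "x \<in> Rblk K r i" using h by (auto simp: Rblk_def)
qed

text \<open>\<open>K\<close> is the paper's \<open>k\<close>, \<open>P = (k - t) / 2\<close>, \<open>S0 = s\<close>, and \<open>n = K m + r\<close> with
  \<open>r = s + P - 1\<close>; \<open>window b\<close> is the \<open>k\<close>-block starting at \<open>b\<close>.\<close>

locale block_layout =
  fixes K P S0 m r n :: nat
  assumes P_pos: "1 \<le> P" and r_eq: "r = S0 + P - 1" and r_less_K: "r < K"
    and n_eq: "n = K * m + r" and m_pos: "1 \<le> m"
begin

definition R :: "nat set" where
  "R = (\<Union>i\<in>{1..m+1}. Rblk K r i)"

definition window :: "nat \<Rightarrow> nat set" where
  "window b = {b..<b + K}"

definition window_start :: "nat \<Rightarrow> bool" where
  "window_start b \<longleftrightarrow> 1 \<le> b \<and> b + K \<le> n + 1"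

definition sparse :: "nat set \<Rightarrow> bool" where
  "sparse N \<longleftrightarrow> (\<forall>b. window_start b \<longrightarrow> card (window b \<inter> N) \<le> P - 1)"

definition pattern :: "(nat \<Rightarrow> nat \<Rightarrow> nat) \<Rightarrow> nat set" where
  "pattern a = {a i l | i l. i \<in> {1..m+1} \<and> l \<in> {1..S0}}"

lemma K_pos: "1 \<le> K"
  using r_less_K by simp

lemma K_le_n: "K \<le> n"
  using m_pos n_eq by (metis le_add1 le_trans mult_le_mono2 mult_1_right)

lemma finite_window [simp]: "finite (window b)" and card_window [simp]: "card (window b) = K"
  by (simp_all add: window_def)

lemma window_subset: "window_start b \<Longrightarrow> window b \<subseteq> {1..n}"
  by (auto simp: window_start_def window_def)

lemma window_start_last: "window_start (n + 1 - K)"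
  using K_le_n K_pos by (auto simp: window_start_def)

lemma window_start_Rblk:
  assumes "i \<in> {1..m}"
  shows "window_start ((i - 1) * K + 1)" and "Rblk K r i \<subseteq> window ((i - 1) * K + 1)"
proof -
  have "(i - 1) * K + K \<le> m * K"
    using assms by (metis atLeastAtMost_iff add.commute mult_Suc Suc_diff_1 less_le_trans
        zero_less_one mult_le_mono1)
  moreover have "n = m * K + r" using n_eq by (simp add: mult.commute)
  ultimately show "window_start ((i - 1) * K + 1)"
    unfolding window_start_def by linarith
  show "Rblk K r i \<subseteq> window ((i - 1) * K + 1)"
    using r_less_K by (auto simp: Rblk_def window_def)
qed

lemma mem_R_iff: "x \<in> R \<longleftrightarrow> x \<in> {1..n} \<and> (x - 1) mod K < r"
proof
  assume "x \<in> R"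
  then obtain i where i: "i \<in> {1..m+1}" "x \<in> Rblk K r i" by (auto simp: R_def)
  have "x \<le> (i - 1) * K + r" using i(2) by (simp add: Rblk_def)
  moreover have "(i - 1) * K \<le> m * K" using i(1) by (intro mult_le_mono1) auto
  moreover have "n = m * K + r" using n_eq by (simp add: mult.commute)
  ultimately have "x \<le> n" by linarith
  then show "x \<in> {1..n} \<and> (x - 1) mod K < r"
    using mem_Rblk_iff[of i r K x] i r_less_K by auto
next
  assume x: "x \<in> {1..n} \<and> (x - 1) mod K < r"
  define i where "i = (x - 1) div K + 1"
  have "x - 1 < K * (m + 1)" using x n_eq r_less_K by auto
  then have "(x - 1) div K < m + 1" by (simp add: less_mult_imp_div_less mult.commute)
  then have "i \<in> {1..m+1}" by (simp add: i_def)
  moreover have "x \<in> Rblk K r i" using mem_Rblk_iff[of i r K x] x r_less_K by (simp add: i_def)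
  ultimately show "x \<in> R" by (auto simp: R_def)
qed

lemma R_subset: "R \<subseteq> {1..n}"
  using mem_R_iff by auto

lemma Rblk_subset_R: "i \<in> {1..m+1} \<Longrightarrow> Rblk K r i \<subseteq> R"
  by (auto simp: R_def)

lemma Rblk_disjoint: "1 \<le> i \<Longrightarrow> 1 \<le> j \<Longrightarrow> i \<noteq> j \<Longrightarrow> Rblk K r i \<inter> Rblk K r j = {}"
  using mem_Rblk_iff[of i r K] mem_Rblk_iff[of j r K] r_less_K by auto

lemma bij_betw_window_mod: "1 \<le> b \<Longrightarrow> bij_betw (\<lambda>x. (x - 1) mod K) (window b) {0..<K}"
proof -
  assume b: "1 \<le> b"
  have "inj_on (\<lambda>x. (x - 1) mod K) (window b)"
  proof (rule linorder_inj_onI')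
    fix x y assume "x \<in> window b" "y \<in> window b" "x < y"
    then have "0 < (y - 1) - (x - 1)" "(y - 1) - (x - 1) < K" using b by (auto simp: window_def)
    then show "(x - 1) mod K \<noteq> (y - 1) mod K"
      by (metis \<open>x < y\<close> dvd_imp_le mod_eq_dvd_iff_nat diff_le_mono less_imp_le_nat not_le)
  qed
  moreover have "(\<lambda>x. (x - 1) mod K) ` window b \<subseteq> {0..<K}" using K_pos by auto
  ultimately show ?thesis
    by (metis bij_betw_def card_image card_subset_eq finite_atLeastLessThan card_window card_atLeastLessThan
        diff_zero)
qed

lemma card_window_Int_R: "window_start b \<Longrightarrow> card (window b \<inter> R) = r"
proof -
  assume b: "window_start b"
  have "window b \<inter> R = {x\<in>window b. (x - 1) mod K < r}"
    using window_subset[OF b] mem_R_iff by auto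
  moreover have "bij_betw (\<lambda>x. (x - 1) mod K) {x\<in>window b. (x - 1) mod K < r} {y\<in>{0..<K}. y < r}"
    using b by (intro bij_betw_Collect bij_betw_window_mod) (auto simp: window_start_def)
  moreover have "{y\<in>{0..<K}. y < r} = {0..<r}" using r_less_K by auto
  ultimately show ?thesis by (simp add: bij_betw_same_card)
qed

definition extremal :: "nat set \<Rightarrow> bool" where
  "extremal N \<longleftrightarrow> N \<subseteq> {1..n} \<and> sparse N \<and> card N = (m + 1) * (P - 1)"

lemma sparse_card_Int_le:
  assumes "sparse N" and "1 \<le> b" and "b + j * K \<le> n + 1"
  shows "card ({b..<b + j * K} \<inter> N) \<le> j * (P - 1)"
  using assms(3)
proof (induction j)
  case (Suc j)
  have "{b..<b + Suc j * K} \<inter> N = ({b..<b + j * K} \<inter> N) \<union> (window (b + j * K) \<inter> N)"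
    by (auto simp: window_def)
  then have "card ({b..<b + Suc j * K} \<inter> N) \<le> card ({b..<b + j * K} \<inter> N) + card (window (b + j * K) \<inter> N)"
    by (simp add: card_Un_le)
  moreover have "window_start (b + j * K)"
    using Suc.prems assms(2) by (simp add: window_start_def add.assoc)
  then have "card (window (b + j * K) \<inter> N) \<le> P - 1" using assms(1) by (simp add: sparse_def)
  ultimately show ?case using Suc by simp
qed simp

lemma Rblk_subset_window:
  assumes "i \<in> {1..m+1}"
  obtains b where "window_start b" and "Rblk K r i \<subseteq> window b"
proof (cases "i \<le> m")
  case True
  then show ?thesis using window_start_Rblk[of i] assms that by auto
next
  case False
  then have "i = m + 1" using assms by auto
  then have "Rblk K r i \<subseteq> window (n + 1 - K)"
    using assms r_less_K K_le_n n_eq by (auto simp: Rblk_def window_def mult.commute)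
  then show ?thesis using window_start_last that by blast
qed

lemma sparse_card_Rblk_Int_le:
  assumes "sparse N" and "i \<in> {1..m+1}"
  shows "card (Rblk K r i \<inter> N) \<le> P - 1"
proof -
  obtain b where b: "window_start b" "Rblk K r i \<subseteq> window b"
    using Rblk_subset_window[OF assms(2)] .
  then have "card (Rblk K r i \<inter> N) \<le> card (window b \<inter> N)" by (intro card_mono) auto
  then show ?thesis using assms(1) b(1) unfolding sparse_def by fastforce
qed

lemma sparse_card_le:
  assumes "sparse N" and "N \<subseteq> {1..n}"
  shows "card N \<le> (m + 1) * (P - 1)"
proof -
  have "N = ({1..<1 + m * K} \<inter> N) \<union> (window (n + 1 - K) \<inter> N)"
    using assms(2) K_le_n n_eq r_less_K by (auto simp: window_def mult.commute)
  then have "card N \<le> card ({1..<1 + m * K} \<inter> N) + card (window (n + 1 - K) \<inter> N)"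
    by (metis card_Un_le)
  also have "\<dots> \<le> m * (P - 1) + (P - 1)"
    using sparse_card_Int_le[OF assms(1), of 1 m] assms(1) window_start_last n_eq
    unfolding sparse_def by (intro add_mono) (auto simp: mult.commute)
  finally show ?thesis by simp
qed

text \<open>The places before and after \<open>R\<^sub>i\<close> split into \<open>m\<close> whole periods of length \<open>K\<close>, each
  carrying at most \<open>P - 1\<close> elements of \<open>N\<close>, so \<open>R\<^sub>i\<close> must carry the remaining \<open>P - 1\<close>.\<close>

lemma extremal_card_Rblk_Int:
  assumes "extremal N" and i: "i \<in> {1..m+1}"
  shows "card (Rblk K r i \<inter> N) = P - 1"
proof -
  have N: "sparse N" "N \<subseteq> {1..n}" "card N = (m + 1) * (P - 1)"
    using assms(1) by (auto simp: extremal_def)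
  define A where "A = {1..<1 + (i - 1) * K}"
  define C where "C = {(i - 1) * K + r + 1..<(i - 1) * K + r + 1 + (m + 1 - i) * K}"
  have mK: "(i - 1) * K + (m + 1 - i) * K = m * K" using i by (simp add: add_mult_distrib[symmetric])
  have "N \<subseteq> (A \<inter> N) \<union> (Rblk K r i \<inter> N) \<union> (C \<inter> N)"
    using N(2) mK n_eq by (auto simp: A_def C_def Rblk_def mult.commute)
  then have "card N \<le> card ((A \<inter> N) \<union> (Rblk K r i \<inter> N) \<union> (C \<inter> N))"
    by (rule card_mono[rotated]) (auto simp: A_def C_def Rblk_def)
  also have "\<dots> \<le> card (A \<inter> N) + card (Rblk K r i \<inter> N) + card (C \<inter> N)"
    by (meson card_Un_le add_mono le_refl order_trans)
  also have "card (A \<inter> N) \<le> (i - 1) * (P - 1)"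
    unfolding A_def using sparse_card_Int_le[OF N(1), of 1 "i - 1"] mK n_eq by (simp add: mult.commute)
  also have "card (C \<inter> N) \<le> (m + 1 - i) * (P - 1)"
    unfolding C_def using sparse_card_Int_le[OF N(1), of "(i - 1) * K + r + 1" "m + 1 - i"] mK n_eq
    by (simp add: mult.commute)
  finally have "(m + 1) * (P - 1) \<le> (i - 1) * (P - 1) + card (Rblk K r i \<inter> N) + (m + 1 - i) * (P - 1)"
    using N(3) by simp
  moreover have "(i - 1) * (P - 1) + (m + 1 - i) * (P - 1) = m * (P - 1)"
    using i by (simp add: add_mult_distrib[symmetric])
  ultimately show ?thesis using sparse_card_Rblk_Int_le[OF N(1) i] by simp
qed

text \<open>An element outside \<open>R\<close> would join the \<open>P - 1\<close> elements of \<open>N\<close> in the block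
  \<open>R\<^sub>i\<close> of its period, overloading that period's window.\<close>

lemma extremal_subset_R:
  assumes "extremal N"
  shows "N \<subseteq> R"
proof
  fix x assume x: "x \<in> N"
  have N: "sparse N" "N \<subseteq> {1..n}" using assms by (auto simp: extremal_def)
  show "x \<in> R"
  proof (rule ccontr)
    assume "x \<notin> R"
    then have x1: "1 \<le> x" "x \<le> n" and xm: "r \<le> (x - 1) mod K" using x N(2) mem_R_iff by auto
    define i where "i = (x - 1) div K + 1"
    have xe: "x - 1 = (i - 1) * K + (x - 1) mod K" by (simp add: i_def)
    have "i \<le> m"
    proof (rule ccontr)
      assume "\<not> i \<le> m"
      then have "m * K \<le> (i - 1) * K" by (intro mult_le_mono1) simp
      then have "m * K + r \<le> x - 1" using xe xm by linarith
      then show False using x1 n_eq by (simp add: mult.commute)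
    qed
    then have i: "i \<in> {1..m}" by (simp add: i_def)
    have "(x - 1) mod K < K" using K_pos by simp
    then have "x \<in> window ((i - 1) * K + 1)"
      using xe x1 unfolding window_def atLeastLessThan_iff by linarith
    then have "insert x (Rblk K r i \<inter> N) \<subseteq> window ((i - 1) * K + 1) \<inter> N"
      using window_start_Rblk(2)[OF i] x by auto
    then have "card (insert x (Rblk K r i \<inter> N)) \<le> card (window ((i - 1) * K + 1) \<inter> N)"
      by (rule card_mono[rotated]) simp
    moreover have "x \<notin> Rblk K r i" using mem_Rblk_iff[of i r K x] i r_less_K xm by simp
    then have "card (insert x (Rblk K r i \<inter> N)) = P"
      using extremal_card_Rblk_Int[OF assms, of i] i P_pos
      by (subst card_insert_disjoint) (auto simp: Rblk_def)
    ultimately show False using N(1) window_start_Rblk(1)[OF i] P_pos unfolding sparse_def by fastforce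
  qed
qed

lemma window_after_Int_R:
  assumes i: "1 \<le> i" and y: "y \<in> Rblk K r i"
  shows "window (y + 1) \<inter> R \<subseteq> {u\<in>Rblk K r i. y < u} \<union> {u\<in>Rblk K r (i + 1). u \<le> y + K}"
proof
  fix u assume u: "u \<in> window (y + 1) \<inter> R"
  then obtain j where j: "j \<in> {1..m+1}" "u \<in> Rblk K r j" by (auto simp: R_def)
  have uw: "y + 1 \<le> u" "u < y + 1 + K" using u by (auto simp: window_def)
  have ydiv: "(y - 1) div K = i - 1" "1 \<le> y" using y mem_Rblk_iff[of i r K y] i r_less_K by auto
  have udiv: "(u - 1) div K = j - 1" using mem_Rblk_iff[of j r K u] j r_less_K by auto
  have "(y - 1) div K \<le> (u - 1) div K" by (rule div_le_mono) (use uw in simp)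
  then have lower: "i - 1 \<le> j - 1" unfolding ydiv(1) udiv .
  have "(u - 1) div K \<le> (y - 1 + K) div K" by (rule div_le_mono) (use uw ydiv(2) in simp)
  also have "(y - 1 + K) div K = i" using K_pos ydiv(1) i by simp
  finally have upper: "j - 1 \<le> i" unfolding udiv .
  have "j = i \<or> j = i + 1" using lower upper i j by auto
  then show "u \<in> {u\<in>Rblk K r i. y < u} \<union> {u\<in>Rblk K r (i + 1). u \<le> y + K}"
    using j uw by auto
qed

context
  fixes N assumes ext: "extremal N"
begin

definition Sblk :: "nat \<Rightarrow> nat set" where
  "Sblk i = Rblk K r i - N"

definition Selem :: "nat \<Rightarrow> nat \<Rightarrow> nat" where
  "Selem i l = sorted_list_of_set (Sblk i) ! (l - 1)"

lemma finite_Sblk: "finite (Sblk i)"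
  by (simp add: Sblk_def Rblk_def)

lemma card_Sblk: "i \<in> {1..m+1} \<Longrightarrow> card (Sblk i) = S0"
proof -
  assume i: "i \<in> {1..m+1}"
  have "card (Sblk i) = card (Rblk K r i) - card (Rblk K r i \<inter> N)"
    unfolding Sblk_def by (rule card_Diff_subset_Int) (simp add: Rblk_def)
  then show ?thesis using extremal_card_Rblk_Int[OF ext i] r_eq P_pos by (simp add: Rblk_def)
qed

lemma Selem_in_Sblk:
  assumes "i \<in> {1..m+1}" and "l \<in> {1..S0}"
  shows "Selem i l \<in> Sblk i"
proof -
  have "l - 1 < length (sorted_list_of_set (Sblk i))" using assms card_Sblk by auto
  then show ?thesis unfolding Selem_def using finite_Sblk by (metis nth_mem set_sorted_list_of_set)
qed

lemma Sblk_eq_Selem_image: "i \<in> {1..m+1} \<Longrightarrow> Sblk i = Selem i ` {1..S0}"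
proof (intro equalityI subsetI)
  fix u assume i: "i \<in> {1..m+1}" and "u \<in> Sblk i"
  then obtain j where j: "j < S0" "u = sorted_list_of_set (Sblk i) ! j"
    using card_Sblk[OF i] finite_Sblk by (metis in_set_conv_nth length_sorted_list_of_set set_sorted_list_of_set)
  then show "u \<in> Selem i ` {1..S0}" by (intro image_eqI[of _ _ "j + 1"]) (auto simp: Selem_def)
qed (use Selem_in_Sblk in auto)

lemma strict_mono_on_Selem:
  assumes i: "i \<in> {1..m+1}"
  shows "strict_mono_on {1..S0} (Selem i)"
proof (rule strict_mono_onI)
  fix l1 l2 assume l: "l1 \<in> {1..S0}" "l2 \<in> {1..S0}" "l1 < l2"
  then have "l2 - 1 < length (sorted_list_of_set (Sblk i))" "l1 - 1 < l2 - 1"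
    using card_Sblk[OF i] by auto
  then show "Selem i l1 < Selem i l2"
    unfolding Selem_def by (intro sorted_wrt_nth_less[OF strict_sorted_list_of_set])
qed

text \<open>If \<open>a\<^sup>i\<^sup>+\<^sup>1\<^sub>l\<close> lay beyond the window starting just after \<open>a\<^sup>i\<^sub>l\<close>, that window
  would meet only \<open>S0 - 1\<close> places of \<open>S\<close> but all \<open>r = S0 + P - 1\<close> residues of \<open>R\<close>, so
  \<open>N\<close> would overload it.\<close>

lemma Selem_step: "i \<in> {1..m} \<Longrightarrow> l \<in> {1..S0} \<Longrightarrow> Selem (i + 1) l \<le> Selem i l + K"
proof (rule ccontr)
  assume i: "i \<in> {1..m}" and l: "l \<in> {1..S0}" and "\<not> Selem (i + 1) l \<le> Selem i l + K"
  define y z where "y = Selem i l" and "z = Selem (i + 1) l"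
  have zy: "y + K < z" using \<open>\<not> _\<close> by (simp add: y_def z_def)
  have i1: "i \<in> {1..m+1}" "i + 1 \<in> {1..m+1}" using i by auto
  have yS: "y \<in> Sblk i" and zS: "z \<in> Sblk (i + 1)"
    using Selem_in_Sblk i1 l by (auto simp: y_def z_def)
  have "z \<in> R" using zS Rblk_subset_R[OF i1(2)] by (auto simp: Sblk_def)
  then have ok: "window_start (y + 1)" using zy R_subset unfolding window_start_def by auto
  have cover: "window (y + 1) \<inter> R \<subseteq> (window (y + 1) \<inter> N) \<union> {u\<in>Sblk i. y < u} \<union> {u\<in>Sblk (i + 1). u < z}"
    using window_after_Int_R[of i y] i yS zy by (auto simp: Sblk_def)
  have "r \<le> card ((window (y + 1) \<inter> N) \<union> {u\<in>Sblk i. y < u} \<union> {u\<in>Sblk (i + 1). u < z})"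
    using card_mono[OF _ cover] card_window_Int_R[OF ok] finite_Sblk by simp
  also have "\<dots> \<le> card (window (y + 1) \<inter> N) + card {u\<in>Sblk i. y < u} + card {u\<in>Sblk (i + 1). u < z}"
    by (meson card_Un_le add_mono le_refl order_trans)
  also have "\<dots> \<le> (P - 1) + (S0 - l) + (l - 1)"
  proof -
    have "card (window (y + 1) \<inter> N) \<le> P - 1" using ext ok by (auto simp: extremal_def sparse_def)
    moreover have "card {u\<in>Sblk i. y < u} = S0 - l" "card {u\<in>Sblk (i + 1). u < z} = l - 1"
      using card_greater_nth_sorted_list_of_set[OF finite_Sblk, of "l - 1" i]
        card_less_nth_sorted_list_of_set[OF finite_Sblk, of "l - 1" "i + 1"] card_Sblk[OF i1(1)]
        card_Sblk[OF i1(2)] l by (auto simp: y_def z_def Selem_def)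
    ultimately show ?thesis by simp
  qed
  finally show False using l r_eq P_pos by auto
qed

lemma extremal_eq_R_minus_pattern: "\<exists>a. admissible_a K r m S0 a \<and> N = R - pattern a"
proof (intro exI conjI)
  show "admissible_a K r m S0 Selem"
    using strict_mono_on_Selem Selem_in_Sblk Selem_step unfolding admissible_a_def Sblk_def by blast
  have "R - N = (\<Union>i\<in>{1..m+1}. Sblk i)" by (auto simp: R_def Sblk_def)
  also have "\<dots> = (\<Union>i\<in>{1..m+1}. Selem i ` {1..S0})" using Sblk_eq_Selem_image by simp
  also have "\<dots> = pattern Selem" unfolding pattern_def by blast
  finally show "N = R - pattern Selem" using extremal_subset_R[OF ext] by auto
qed

end

context
  fixes a assumes adm: "admissible_a K r m S0 a"
begin

lemma a_mem_Rblk: "i \<in> {1..m+1} \<Longrightarrow> l \<in> {1..S0} \<Longrightarrow> a i l \<in> Rblk K r i"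
  using adm by (auto simp: admissible_a_def)

lemma inj_on_a: "i \<in> {1..m+1} \<Longrightarrow> inj_on (a i) {1..S0}"
  using adm by (auto simp: admissible_a_def intro: strict_mono_on_imp_inj_on)

lemma a_step: "i \<in> {1..m} \<Longrightarrow> l \<in> {1..S0} \<Longrightarrow> a (i + 1) l \<le> a i l + K"
  using adm by (auto simp: admissible_a_def)

lemma R_minus_pattern: "R - pattern a = (\<Union>i\<in>{1..m+1}. Rblk K r i - a i ` {1..S0})"
proof (intro equalityI subsetI)
  fix x assume "x \<in> R - pattern a"
  then show "x \<in> (\<Union>i\<in>{1..m+1}. Rblk K r i - a i ` {1..S0})"
    unfolding R_def pattern_def by blast
next
  fix x assume "x \<in> (\<Union>i\<in>{1..m+1}. Rblk K r i - a i ` {1..S0})"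
  then obtain i where i: "i \<in> {1..m+1}" "x \<in> Rblk K r i" "x \<notin> a i ` {1..S0}" by blast
  have "x \<notin> pattern a"
  proof
    assume "x \<in> pattern a"
    then obtain j l where jl: "j \<in> {1..m+1}" "l \<in> {1..S0}" "x = a j l" by (auto simp: pattern_def)
    then have "j \<noteq> i" using i(3) by auto
    then show False using Rblk_disjoint[of i j] a_mem_Rblk[OF jl(1,2)] i jl by auto
  qed
  then show "x \<in> R - pattern a" using i Rblk_subset_R by blast
qed

lemma card_R_minus_pattern: "card (R - pattern a) = (m + 1) * (P - 1)"
proof -
  have "card (R - pattern a) = (\<Sum>i\<in>{1..m+1}. card (Rblk K r i - a i ` {1..S0}))"
    unfolding R_minus_pattern
  proof (rule card_UN_disjoint)
    show "\<forall>i\<in>{1..m+1}. \<forall>j\<in>{1..m+1}. i \<noteq> j \<longrightarrow>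
        (Rblk K r i - a i ` {1..S0}) \<inter> (Rblk K r j - a j ` {1..S0}) = {}"
      using Rblk_disjoint by fastforce
  qed (auto simp: Rblk_def)
  also have "\<dots> = (\<Sum>i\<in>{1..m+1}. P - 1)"
  proof (rule sum.cong[OF refl])
    fix i assume i: "i \<in> {1..m+1}"
    have "a i ` {1..S0} \<subseteq> Rblk K r i" using a_mem_Rblk[OF i] by auto
    moreover have "card (a i ` {1..S0}) = S0" using card_image[OF inj_on_a[OF i]] by simp
    ultimately show "card (Rblk K r i - a i ` {1..S0}) = P - 1"
      using card_Diff_subset[of "a i ` {1..S0}" "Rblk K r i"] r_eq P_pos by (simp add: Rblk_def)
  qed
  finally show ?thesis by simp
qed

text \<open>A window starting in period \<open>i\<close> contains, for each \<open>l\<close>, either \<open>a i l\<close> or, if that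
  lies before the window, \<open>a (i + 1) l\<close>: this is where the condition
  \<open>a (i + 1) l \<le> a i l + K\<close> enters.\<close>

lemma window_Int_pattern_card_ge:
  assumes b: "window_start b"
  shows "S0 \<le> card (window b \<inter> pattern a)"
proof -
  define i where "i = (b - 1) div K + 1"
  have b1: "1 \<le> b" "b + K \<le> n + 1" using b by (auto simp: window_start_def)
  have be: "b - 1 = (i - 1) * K + (b - 1) mod K" by (simp add: i_def)
  have "(b - 1) mod K < K" using K_pos by simp
  then have bK: "(i - 1) * K < b" "b \<le> (i - 1) * K + K" using be b1 by linarith+
  have "i \<le> m"
  proof (rule ccontr)
    assume "\<not> i \<le> m"
    then have "m * K \<le> (i - 1) * K" by (intro mult_le_mono1) simp
    moreover have "n = m * K + r" using n_eq by (simp add: mult.commute)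
    ultimately show False using bK b1 r_less_K by linarith
  qed
  then have i: "i \<in> {1..m+1}" "i + 1 \<in> {1..m+1}" "i \<in> {1..m}" by (auto simp: i_def)
  have iK: "(i + 1 - 1) * K = (i - 1) * K + K" by (simp add: i_def)
  define g where "g l = (if a i l \<in> window b then a i l else a (i + 1) l)" for l
  have "g l \<in> window b" if l: "l \<in> {1..S0}" for l
  proof (cases "a i l \<in> window b")
    case False
    have "a i l \<le> (i - 1) * K + r" "(i + 1 - 1) * K + 1 \<le> a (i + 1) l"
      using a_mem_Rblk[OF i(1) l] a_mem_Rblk[OF i(2) l] by (auto simp: Rblk_def)
    then show ?thesis
      using False a_step[OF i(3) l] bK iK r_less_K unfolding g_def window_def by auto
  qed (simp add: g_def)
  moreover have "g l \<in> pattern a" if "l \<in> {1..S0}" for l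
  proof -
    have "a i l \<in> pattern a" "a (i + 1) l \<in> pattern a" using that i unfolding pattern_def by blast+
    then show ?thesis by (simp add: g_def)
  qed
  moreover have "inj_on g {1..S0}"
  proof (rule inj_onI)
    fix l1 l2 assume l: "l1 \<in> {1..S0}" "l2 \<in> {1..S0}" and eq: "g l1 = g l2"
    have disj: "Rblk K r i \<inter> Rblk K r (i + 1) = {}" using Rblk_disjoint i by auto
    note blk1 = a_mem_Rblk[OF i(1) l(1)] a_mem_Rblk[OF i(2) l(1)]
      and blk2 = a_mem_Rblk[OF i(1) l(2)] a_mem_Rblk[OF i(2) l(2)]
    show "l1 = l2"
    proof (cases "a i l1 \<in> window b"; cases "a i l2 \<in> window b")
      assume "a i l1 \<in> window b" "a i l2 \<in> window b"
      then show ?thesis using eq l inj_onD[OF inj_on_a[OF i(1)]] by (simp add: g_def)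
    next
      assume "a i l1 \<notin> window b" "a i l2 \<notin> window b"
      then show ?thesis using eq l inj_onD[OF inj_on_a[OF i(2)]] by (simp add: g_def)
    next
      assume "a i l1 \<in> window b" "a i l2 \<notin> window b"
      then show ?thesis using eq blk1 blk2 disj by (simp add: g_def disjoint_iff)
    next
      assume "a i l1 \<notin> window b" "a i l2 \<in> window b"
      then show ?thesis using eq blk1 blk2 disj by (simp add: g_def disjoint_iff)
    qed
  qed
  ultimately have "card (g ` {1..S0}) \<le> card (window b \<inter> pattern a)"
    by (intro card_mono) auto
  then show ?thesis using card_image[OF \<open>inj_on g {1..S0}\<close>] by simp
qed

lemma sparse_R_minus_pattern: "sparse (R - pattern a)"
  unfolding sparse_def
proof (intro allI impI)
  fix b assume b: "window_start b"
  have "pattern a \<subseteq> R" using a_mem_Rblk Rblk_subset_R unfolding pattern_def by blast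
  then have "window b \<inter> R = (window b \<inter> (R - pattern a)) \<union> (window b \<inter> pattern a)" by auto
  then have "card (window b \<inter> R) = card (window b \<inter> (R - pattern a)) + card (window b \<inter> pattern a)"
    by (simp add: card_Un_disjoint disjoint_iff)
  then show "card (window b \<inter> (R - pattern a)) \<le> P - 1"
    using card_window_Int_R[OF b] window_Int_pattern_card_ge[OF b] r_eq by linarith
qed

end

lemma card_window_Suc_Int:
  "card (window (c + 1) \<inter> N) \<le> card (window c \<inter> N) + 1"
  "card (window c \<inter> N) \<le> card (window (c + 1) \<inter> N) + 1"
proof -
  have "window (c + 1) \<inter> N \<subseteq> insert (c + K) (window c \<inter> N)" by (auto simp: window_def)
  then have "card (window (c + 1) \<inter> N) \<le> card (insert (c + K) (window c \<inter> N))"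
    by (intro card_mono) auto
  also have "\<dots> \<le> card (window c \<inter> N) + 1" by (simp add: card_insert_if)
  finally show "card (window (c + 1) \<inter> N) \<le> card (window c \<inter> N) + 1" .
  have "window c \<inter> N \<subseteq> insert c (window (c + 1) \<inter> N)" by (auto simp: window_def)
  then have "card (window c \<inter> N) \<le> card (insert c (window (c + 1) \<inter> N))"
    by (intro card_mono) auto
  also have "\<dots> \<le> card (window (c + 1) \<inter> N) + 1" by (simp add: card_insert_if)
  finally show "card (window c \<inter> N) \<le> card (window (c + 1) \<inter> N) + 1" .
qed

theorem extremal_iff: "extremal N \<longleftrightarrow> (\<exists>a. admissible_a K r m S0 a \<and> N = R - pattern a)"
  using extremal_eq_R_minus_pattern card_R_minus_pattern sparse_R_minus_pattern R_subset
  by (auto simp: extremal_def)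

end

locale signed_block_layout = block_layout +
  fixes f :: "nat \<Rightarrow> int"
  assumes f_values: "\<forall>x\<in>{1..n}. f x \<in> {-1, 1}" and two_P_le_K: "2 * P \<le> K"
begin

definition Neg :: "int \<Rightarrow> nat set" where
  "Neg e = {x\<in>{1..n}. e * f x = -1}"

lemma Neg_subset: "Neg e \<subseteq> {1..n}"
  by (auto simp: Neg_def)

lemma fsum_eq_card_Neg:
  assumes "B \<subseteq> {1..n}" and "e \<in> {1, -1}"
  shows "e * fsum f B = int (card B) - 2 * int (card (B \<inter> Neg e))"
proof -
  have "B \<inter> Neg e = {x\<in>B. e * f x = -1}" using assms(1) by (auto simp: Neg_def)
  then show ?thesis
    using fsum_sign_card[of B f e] assms f_values finite_subset[OF assms(1)] by auto
qed

lemma card_window_Int_Neg_uminus: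
  "window_start b \<Longrightarrow> card (window b \<inter> Neg (-1)) = K - card (window b \<inter> Neg 1)"
proof -
  assume b: "window_start b"
  have "window b \<inter> Neg (-1) = window b - (window b \<inter> Neg 1)"
    using window_subset[OF b] f_values by (auto simp: Neg_def)
  then show ?thesis by (simp add: card_Diff_subset)
qed

lemma window_fsum_gt_iff:
  assumes b: "window_start b"
  shows "\<bar>fsum f (window b)\<bar> > int K - 2 * int P \<longleftrightarrow>
    card (window b \<inter> Neg 1) \<le> P - 1 \<or> card (window b \<inter> Neg (-1)) \<le> P - 1"
proof -
  have "fsum f (window b) = int K - 2 * int (card (window b \<inter> Neg 1))"
    using fsum_eq_card_Neg[OF window_subset[OF b], of 1] by simp
  moreover have "card (window b \<inter> Neg 1) \<le> K"
    using card_mono[of "window b" "window b \<inter> Neg 1"] by simp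
  ultimately show ?thesis using card_window_Int_Neg_uminus[OF b] P_pos by (auto simp: abs_if)
qed

text \<open>The number of \<open>-1\<close>'s changes by at most one between adjacent windows, but by at least
  \<open>K - 2P + 2 \<ge> 2\<close> between a window where \<open>-1\<close> is the minority and one where \<open>1\<close> is;
  so one sign is the minority in every window.\<close>

lemma sparse_Neg_exists:
  assumes "\<forall>b. window_start b \<longrightarrow>
    card (window b \<inter> Neg 1) \<le> P - 1 \<or> card (window b \<inter> Neg (-1)) \<le> P - 1"
  shows "\<exists>e\<in>{1, -1}. sparse (Neg e)"
proof -
  define low where "low b \<longleftrightarrow> card (window b \<inter> Neg 1) \<le> P - 1" for b
  have high: "K + 1 - P \<le> card (window b \<inter> Neg 1)" if b: "window_start b" "\<not> low b" for b
  proof -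
    have "card (window b \<inter> Neg (-1)) \<le> P - 1" using assms b unfolding low_def by blast
    then show ?thesis using card_window_Int_Neg_uminus[OF b(1)] P_pos by linarith
  qed
  have step: "window_start (b + 1) \<Longrightarrow> low (b + 1) = low 1" for b
  proof (induction b)
    case (Suc b)
    have ok: "window_start (b + 1)" using Suc.prems by (simp add: window_start_def)
    have "card (window (b + 2) \<inter> Neg 1) \<le> card (window (b + 1) \<inter> Neg 1) + 1"
      "card (window (b + 1) \<inter> Neg 1) \<le> card (window (b + 2) \<inter> Neg 1) + 1"
      using card_window_Suc_Int[of "b + 1" "Neg 1"] by (simp_all add: add.assoc)
    moreover have "window_start (b + 2)" using Suc.prems by simp
    ultimately have "low (b + 2) = low (b + 1)"
      using high[OF ok] high[of "b + 2"] two_P_le_K P_pos unfolding low_def by linarith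
    then show ?case using Suc ok by simp
  qed simp
  have all: "window_start b \<Longrightarrow> low b = low 1" for b
    using step[of "b - 1"] by (cases b) (auto simp: window_start_def)
  show ?thesis
  proof (cases "low 1")
    case True
    then show ?thesis using all unfolding low_def sparse_def by force
  next
    case False
    have "sparse (Neg (-1))"
      unfolding sparse_def
    proof (intro allI impI)
      fix b assume b: "window_start b"
      then have "K + 1 - P \<le> card (window b \<inter> Neg 1)" using high all False by blast
      then show "card (window b \<inter> Neg (-1)) \<le> P - 1" using card_window_Int_Neg_uminus[OF b] by linarith
    qed
    then show ?thesis by blast
  qed
qed

lemma sign_pattern_iff:
  assumes "X \<subseteq> {1..n}" and "e \<in> {1, -1}"
  shows "(\<forall>x\<in>{1..n}. e * f x = (if x \<in> X then -1 else 1)) \<longleftrightarrow> Neg e = X"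
proof -
  have sign: "e * f x = -1 \<or> e * f x = 1" if "x \<in> {1..n}" for x
    using assms(2) f_values that by auto
  have "e * f x = (if x \<in> X then -1 else 1) \<longleftrightarrow> (x \<in> Neg e \<longleftrightarrow> x \<in> X)" if "x \<in> {1..n}" for x
    using sign[OF that] that by (auto simp: Neg_def)
  then have "(\<forall>x\<in>{1..n}. e * f x = (if x \<in> X then -1 else 1)) \<longleftrightarrow> (\<forall>x\<in>{1..n}. x \<in> Neg e \<longleftrightarrow> x \<in> X)"
    by (rule ball_cong[OF refl])
  also have "\<dots> \<longleftrightarrow> Neg e = X" using assms(1) Neg_subset by blast
  finally show ?thesis .
qed

lemma inF_iff: "inF K S0 n f \<longleftrightarrow> (\<exists>e\<in>{1, -1}. \<exists>a. admissible_a K r m S0 a \<and> Neg e = R - pattern a)"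
proof -
  have divmod: "n div K = m" "n mod K = r" using n_eq r_less_K by simp_all
  have S0_0: "admissible_a K r m S0 (\<lambda>_ _. 0) \<and> pattern a = {}" if "S0 = 0" for a
    using that unfolding admissible_a_def pattern_def strict_mono_on_def by simp
  have shape: "(if r = 0 then R' = {} \<and> S = {}
      else R' = (\<Union>i\<in>{1..m+1}. Rblk K r i) \<and>
        (if S0 = 0 then S = {} else (\<exists>a. admissible_a K r m S0 a \<and>
          S = {a i l | i l. i \<in> {1..m+1} \<and> l \<in> {1..S0}})))
    \<longleftrightarrow> R' = R \<and> (\<exists>a. admissible_a K r m S0 a \<and> S = pattern a)" for R' S
  proof (cases "S0 = 0")
    case True
    then have "(\<exists>a. admissible_a K r m S0 a \<and> S = pattern a) \<longleftrightarrow> S = {}" using S0_0 by blast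
    moreover have "r = 0 \<Longrightarrow> R = {}" using mem_R_iff by auto
    ultimately show ?thesis using True by (cases "r = 0") (simp_all add: R_def)
  next
    case False
    then have "r \<noteq> 0" using r_eq P_pos by simp
    show ?thesis unfolding if_not_P[OF \<open>r \<noteq> 0\<close>] if_not_P[OF False] R_def pattern_def
      by (rule refl)
  qed
  have sign: "(\<forall>x\<in>{1..n}. e * f x = (if x \<in> R - pattern a then -1 else 1)) \<longleftrightarrow> Neg e = R - pattern a"
    if "e \<in> {1, -1}" for e a
    by (rule sign_pattern_iff[OF _ that]) (use R_subset in blast)
  have "inF K S0 n f \<longleftrightarrow> (\<exists>a. admissible_a K r m S0 a \<and>
      (\<exists>e\<in>{1, -1}. \<forall>x\<in>{1..n}. e * f x = (if x \<in> R - pattern a then -1 else 1)))"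
    unfolding inF_def Let_def divmod shape by auto
  also have "\<dots> \<longleftrightarrow> (\<exists>a. admissible_a K r m S0 a \<and> (\<exists>e\<in>{1, -1}. Neg e = R - pattern a))"
    by (intro ex_cong1 conj_cong refl bex_cong sign)
  finally show ?thesis by blast
qed

lemma kblocks_eq: "kblocks K n = window ` {b. window_start b}"
proof -
  have "{b..b + K - 1} = window b" for b using K_pos by (auto simp: window_def)
  moreover have "b + K - 1 \<le> n \<longleftrightarrow> b + K \<le> n + 1" for b using K_pos by linarith
  ultimately show ?thesis unfolding kblocks_def window_start_def by auto
qed

theorem balanced_iff_inF:
  assumes "2 * ((m + 1) * (P - 1)) \<le> n"
  shows "(\<bar>fsum f {1..n}\<bar> = int n - 2 * int ((m + 1) * (P - 1)) \<and>
     (\<forall>B\<in>kblocks K n. \<bar>fsum f B\<bar> > int K - 2 * int P))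
   \<longleftrightarrow> inF K S0 n f"
proof -
  have total: "e * fsum f {1..n} = int n - 2 * int (card (Neg e))" if "e \<in> {1, -1}" for e
    using fsum_eq_card_Neg[of "{1..n}" e] that Neg_subset by (simp add: Int_absorb1)
  have blocks: "(\<forall>B\<in>kblocks K n. \<bar>fsum f B\<bar> > int K - 2 * int P) \<longleftrightarrow>
      (\<forall>b. window_start b \<longrightarrow>
        card (window b \<inter> Neg 1) \<le> P - 1 \<or> card (window b \<inter> Neg (-1)) \<le> P - 1)"
    unfolding kblocks_eq using window_fsum_gt_iff by blast
  have "(\<bar>fsum f {1..n}\<bar> = int n - 2 * int ((m + 1) * (P - 1)) \<and>
      (\<forall>B\<in>kblocks K n. \<bar>fsum f B\<bar> > int K - 2 * int P)) \<longleftrightarrow> (\<exists>e\<in>{1, -1}. extremal (Neg e))"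
  proof
    assume bal: "\<bar>fsum f {1..n}\<bar> = int n - 2 * int ((m + 1) * (P - 1)) \<and>
      (\<forall>B\<in>kblocks K n. \<bar>fsum f B\<bar> > int K - 2 * int P)"
    then obtain e where e: "e \<in> {1, -1}" "sparse (Neg e)" using blocks sparse_Neg_exists by blast
    then have "card (Neg e) \<le> (m + 1) * (P - 1)" using sparse_card_le Neg_subset by blast
    moreover have "\<bar>e * fsum f {1..n}\<bar> = int n - 2 * int ((m + 1) * (P - 1))"
      using bal e(1) by (auto simp: abs_mult)
    ultimately have "card (Neg e) = (m + 1) * (P - 1)" using total[OF e(1)] by linarith
    then show "\<exists>e\<in>{1, -1}. extremal (Neg e)" using e Neg_subset unfolding extremal_def by blast
  next
    assume "\<exists>e\<in>{1, -1}. extremal (Neg e)"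
    then obtain e where e: "e \<in> {1, -1}" "sparse (Neg e)" "card (Neg e) = (m + 1) * (P - 1)"
      unfolding extremal_def by blast
    have "\<bar>fsum f {1..n}\<bar> = \<bar>e * fsum f {1..n}\<bar>" using e(1) by (auto simp: abs_mult)
    also have "e * fsum f {1..n} = int n - 2 * int ((m + 1) * (P - 1))"
      using total[OF e(1)] e(3) by simp
    also have "\<bar>int n - 2 * int ((m + 1) * (P - 1))\<bar> = int n - 2 * int ((m + 1) * (P - 1))"
      using assms by linarith
    finally have "\<bar>fsum f {1..n}\<bar> = int n - 2 * int ((m + 1) * (P - 1))" .
    moreover have "card (window b \<inter> Neg 1) \<le> P - 1 \<or> card (window b \<inter> Neg (-1)) \<le> P - 1"
      if "window_start b" for b
      using e(1,2) that unfolding sparse_def by auto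
    ultimately show "\<bar>fsum f {1..n}\<bar> = int n - 2 * int ((m + 1) * (P - 1)) \<and>
      (\<forall>B\<in>kblocks K n. \<bar>fsum f B\<bar> > int K - 2 * int P)" using blocks by blast
  qed
  then show ?thesis by (simp only: inF_iff extremal_iff)
qed

end

lemma theorem2p7_parameters:
  fixes k t q s :: int and n :: nat
  assumes t: "0 \<le> t" "t < k"
    and par: "[t = k] (mod 2)"
    and s: "s \<le> t + 1" "[s = q + (k - t - 2) div 2] (mod (t + 2))"
    and big: "real_of_int k ^ 2 / (2 * (t + 2)) + (q - s) * k / (t + 2) - t / 2 + s > k"
    and n: "real n = real_of_int k ^ 2 / (2 * (t + 2)) + (q - s) * k / (t + 2) - t / 2 + s - 1"
  obtains p M where "k = t + 2 * p" "1 \<le> p" "1 \<le> M"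
    "q = (t + 2) * M + s - p + 1" "int n = M * k + p + s - 1"
proof -
  define p where "p = (k - t) div 2"
  have "2 dvd (k - t)" using par by (simp add: cong_iff_dvd_diff)
  then have kp: "k = t + 2 * p" unfolding p_def by auto
  have p1: "1 \<le> p" using kp t by linarith
  have "(k - t - 2) div 2 = p - 1" using kp by simp
  then have "(t + 2) dvd (q + (p - 1) - s)"
    using s(2) by (metis cong_iff_dvd_diff dvd_minus_iff minus_diff_eq)
  then obtain M where "q + (p - 1) - s = (t + 2) * M" by (elim dvdE)
  then have qM: "q = (t + 2) * M + s - p + 1" by linarith
  have "real_of_int k ^ 2 / (2 * (t + 2)) + (q - s) * k / (t + 2) - t / 2 + s = M * k + p + s"
  proof -
    have "real_of_int t + 2 \<noteq> 0" using t by linarith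
    then show ?thesis unfolding qM kp by (simp add: divide_simps power2_eq_square) algebra
  qed
  then have nM: "int n = M * k + p + s - 1" and "M * k + p + s > k"
    using n big by linarith+
  then have "1 \<le> M" using t s(1) kp by (smt (verit) mult_nonpos_nonneg)
  then show ?thesis using that kp p1 qM nM by blast
qed

theorem theorem2p7:
  fixes k t q s :: int and n :: nat and f :: "nat \<Rightarrow> int"
  assumes q: "q \<ge> 0"
    and t: "0 \<le> t" "t < k"
    and par: "[t = k] (mod 2)"
    and s: "0 \<le> s" "s \<le> t + 1" "[s = q + (k - t - 2) div 2] (mod (t + 2))"
    and big: "real_of_int k ^ 2 / (2 * (t + 2)) + (q - s) * k / (t + 2) - t / 2 + s > k"
    and n: "real n = real_of_int k ^ 2 / (2 * (t + 2)) + (q - s) * k / (t + 2) - t / 2 + s - 1"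
    and f: "\<forall>x\<in>{1..n}. f x \<in> {-1, 1}"
  shows "(\<bar>fsum f {1..n}\<bar> = q \<and> (\<forall>B\<in>kblocks (nat k) n. \<bar>fsum f B\<bar> > t))
         \<longleftrightarrow> inF (nat k) (nat s) n f"
proof -
  obtain p M where kp: "k = t + 2 * p" and p: "1 \<le> p" and M: "1 \<le> M"
    and qM: "q = (t + 2) * M + s - p + 1" and nM: "int n = M * k + p + s - 1"
    using theorem2p7_parameters[OF t par s(2,3) big n] by blast
  define K P S0 m where "K = nat k" and "P = nat p" and "S0 = nat s" and "m = nat M"
  then have ints: "int K = k" "int P = p" "int S0 = s" "int m = M" using t p s M by auto
  interpret signed_block_layout K P S0 m "S0 + P - 1" n f
  proof
    have "int n = int (K * m + (S0 + P - 1))" using nM ints p by (simp add: of_nat_diff mult.commute)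
    then show "n = K * m + (S0 + P - 1)" by (simp only: of_nat_eq_iff)
  qed (use ints kp t p s M f in auto)
  have "int ((m + 1) * (P - 1)) = (int m + 1) * (int P - 1)"
    unfolding of_nat_mult of_nat_add of_nat_diff[OF P_pos] by simp
  then have "int ((m + 1) * (P - 1)) = (M + 1) * (p - 1)" using ints by simp
  then have q_eq: "q = int n - 2 * int ((m + 1) * (P - 1))"
    unfolding nM qM kp by (simp add: algebra_simps)
  moreover have t_eq: "t = int K - 2 * int P" using ints kp by simp
  ultimately have "2 * ((m + 1) * (P - 1)) \<le> n" using q by linarith
  then show ?thesis
    unfolding K_def[symmetric] S0_def[symmetric] q_eq t_eq by (rule balanced_iff_inF)
qed

end
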